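(* Let $\omega(r)=\frac{r^2}{\sin^2r}-1$. The map $u(x)=[[x]]+[[\sin x]]:(-\pi/4,\pi/4)\to{\bf Q}_2(\mathbb{R})$ is a Dirichlet $\omega$-minimizer, i.e. for every interval $(x-r,x+r)\subset(-\pi/4,\pi/4)$, $\mathrm{Dir}(u;(x-r,x+r))\le(1+\omega(r))\,\mathrm{Dir}(v;(x-r,x+r))$ where $v$ is Dirichlet minimizing with $v(x\pm r)=u(x\pm r)$; moreover the origin is a branch point of $u$.
   Context: ${\bf Q}_2(\mathbb{R})$ is the space of unordered pairs $[[a]]+[[b]]$ of reals with metric $\mathcal{G}([[a_1]]+[[a_2]],[[b_1]]+[[b_2]])=\min_\sigma(\sum_i|a_i-b_{\sigma(i)}|^2)^{1/2}$. For $u=[[u_1]]+[[u_2]]$ with $u_1\le u_2$ Lipschitz, $\mathrm{Dir}(u;I)=\int_I(u_1')^2+(u_2')^2$; Dirichlet minimizing with given endpoint values means minimizing $\mathrm{Dir}$ among (Sobolev) ${\bf Q}_2(\mathbb{R})$-valued maps with those endpoint values. For continuous $u$, with $\sigma(x)=\mathrm{card}(\mathrm{spt}\,u(x))$, a branch point is a point where $\sigma$ is discontinuous. *)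

theory Defs
  imports "HOL-Analysis.Analysis"
begin

text \<open>One-dimensional Sobolev space W^{1,2}(a,b): f is the integral of a square-integrable
  function g (i.e. f is absolutely continuous with derivative in L^2).\<close>
definition sob12 :: "real \<Rightarrow> real \<Rightarrow> (real \<Rightarrow> real) \<Rightarrow> bool" where
  "sob12 a b f \<longleftrightarrow> (\<exists>g. g absolutely_integrable_on {a..b}
      \<and> (\<lambda>t. (g t)\<^sup>2) integrable_on {a..b}
      \<and> (\<forall>t\<in>{a..b}. f t = f a + integral {a..t} g))"

text \<open>A Q_2(R)-valued Sobolev map on (a,b), represented through its ordered selection
  [[v1]] + [[v2]] with v1 \<le> v2.\<close>
definition Q2sob :: "real \<Rightarrow> real \<Rightarrow> (real \<Rightarrow> real) \<Rightarrow> (real \<Rightarrow> real) \<Rightarrow> bool" where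
  "Q2sob a b v1 v2 \<longleftrightarrow> sob12 a b v1 \<and> sob12 a b v2 \<and> (\<forall>t\<in>{a..b}. v1 t \<le> v2 t)"

definition Dir2 :: "real \<Rightarrow> real \<Rightarrow> (real \<Rightarrow> real) \<Rightarrow> (real \<Rightarrow> real) \<Rightarrow> real" where
  "Dir2 a b v1 v2 = integral {a..b} (\<lambda>t. (deriv v1 t)\<^sup>2 + (deriv v2 t)\<^sup>2)"

definition Dir_minimizing :: "real \<Rightarrow> real \<Rightarrow> (real \<Rightarrow> real) \<Rightarrow> (real \<Rightarrow> real) \<Rightarrow> bool" where
  "Dir_minimizing a b v1 v2 \<longleftrightarrow> Q2sob a b v1 v2 \<and>
     (\<forall>w1 w2. Q2sob a b w1 w2 \<and> w1 a = v1 a \<and> w2 a = v2 a \<and> w1 b = v1 b \<and> w2 b = v2 b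
        \<longrightarrow> Dir2 a b v1 v2 \<le> Dir2 a b w1 w2)"

definition omega :: "real \<Rightarrow> real" where
  "omega r = r\<^sup>2 / (sin r)\<^sup>2 - 1"

text \<open>Ordered selection of u(x) = [[x]] + [[sin x]].\<close>
definition u1 :: "real \<Rightarrow> real" where "u1 t = min t (sin t)"
definition u2 :: "real \<Rightarrow> real" where "u2 t = max t (sin t)"

text \<open>sigma(x) = card (spt u(x)).\<close>
definition sigma_u :: "real \<Rightarrow> nat" where "sigma_u t = card {t, sin t}"

end

theory Submission
  imports Defs
begin

text \<open>
  Any \<open>Q\<^sub>2(\<real>)\<close>-valued Sobolev map on \<open>(x - r, x + r)\<close> has, by Cauchy-Schwarz, at least
  the energy of the affine interpolation of its endpoint values; this bounds the energy of the
  Dirichlet minimizer \<open>v\<close> from below. The energy of \<open>u\<close> is explicit,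
  \<open>3 r + cos (2 x) sin (2 r) / 2\<close>, and exceeds the affine energy of its endpoint values only
  by a factor controlled by \<open>r\<^sup>2 / sin\<^sup>2 r\<close>: away from \<open>0\<close> the gap is \<open>sin (2 r) \<le> 2 r\<close>,
  and when the sheets cross at \<open>0\<close> the loss is of order \<open>r\<^sup>6\<close>, absorbed by
  \<open>r\<^sup>2 - sin\<^sup>2 r \<ge> r\<^sup>4 / 8\<close>. Finally \<open>sin t \<noteq> t\<close> for small \<open>t \<noteq> 0\<close>, so the number of
  sheets drops from 2 to 1 exactly at the origin.
\<close>

lemma integral_right_quotient_tendsto_ae:
  fixes G :: "real \<Rightarrow> real"
  assumes "\<And>a b. G integrable_on {a..b}"
  obtains N where "negligible N"
    "\<And>x. x \<notin> N \<Longrightarrow> ((\<lambda>h. integral {x..x + h} G / h) \<longlongrightarrow> G x) (at_right 0)"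
proof -
  obtain N where N: "negligible N"
    "\<And>x e. \<lbrakk>x \<notin> N; 0 < e\<rbrakk> \<Longrightarrow> \<exists>d>0. \<forall>h. 0 < h \<and> h < d \<longrightarrow>
       norm (integral (cbox x (x + h *\<^sub>R One)) G /\<^sub>R h ^ DIM(real) - G x) < e"
    using integrable_ccontinuous_explicit[of G] assms by (metis cbox_interval)
  show ?thesis
  proof (rule that[OF N(1)])
    fix x assume "x \<notin> N"
    then show "((\<lambda>h. integral {x..x + h} G / h) \<longlongrightarrow> G x) (at_right 0)"
      using N(2) by (fastforce simp: tendsto_iff eventually_at_right_field dist_real_def
          cbox_interval divide_inverse_commute)
  qed
qed

lemma integral_left_quotient_tendsto_ae:
  fixes G :: "real \<Rightarrow> real"
  assumes G: "\<And>a b. G integrable_on {a..b}"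
  obtains N where "negligible N"
    "\<And>x. x \<notin> N \<Longrightarrow> ((\<lambda>h. integral {x - h..x} G / h) \<longlongrightarrow> G x) (at_right 0)"
proof -
  obtain N where N: "negligible N"
    "\<And>x. x \<notin> N \<Longrightarrow> ((\<lambda>h. integral {x..x + h} (\<lambda>t. G (- t)) / h) \<longlongrightarrow> G (- x)) (at_right 0)"
  proof (rule integral_right_quotient_tendsto_ae)
    show "(\<lambda>t. G (- t)) integrable_on {c..d}" for c d
      using G[of "- d" "- c"] Henstock_Kurzweil_Integration.integrable_reflect_real[of G "- c" "- d"]
      by (simp del: Henstock_Kurzweil_Integration.integrable_reflect_real)
  qed blast
  have "negligible (uminus ` N)"
  proof (rule negligible_differentiable_image_negligible[OF order_refl N(1)])
    show "uminus differentiable_on N"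
      using differentiable_on_minus[OF differentiable_on_ident] by (simp add: fun_Compl_def)
  qed
  then show ?thesis
  proof (rule that)
    fix x assume "x \<notin> uminus ` N"
    then have "- x \<notin> N" by (force simp: image_iff)
    moreover have "integral {- x..- x + h} (\<lambda>t. G (- t)) = integral {x - h..x} G" for h
      using Henstock_Kurzweil_Integration.integral_reflect_real[of x "x - h" G] by simp
    ultimately show "((\<lambda>h. integral {x - h..x} G / h) \<longlongrightarrow> G x) (at_right 0)"
      using N(2)[of "- x"] by simp
  qed
qed

lemma indefinite_integral_has_derivative_ae:
  fixes g :: "real \<Rightarrow> real"
  assumes g: "g integrable_on {a..b}"
  obtains N where "negligible N"
    "\<And>x. x \<in> {a<..<b} \<Longrightarrow> x \<notin> N \<Longrightarrow> ((\<lambda>t. integral {a..t} g) has_real_derivative g x) (at x)"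
proof -
  \<comment> \<open>zero extension, so that the a.e. limits on all of \<open>\<real>\<close> apply\<close>
  define G where "G t = (if t \<in> {a..b} then g t else 0)" for t
  have G: "G integrable_on {c..d}" for c d
    unfolding G_def integrable_restrict_Int Int_atLeastAtMost
    by (rule integrable_on_subinterval[OF g]) auto
  obtain N1 where N1: "negligible N1"
    "\<And>x. x \<notin> N1 \<Longrightarrow> ((\<lambda>h. integral {x..x + h} G / h) \<longlongrightarrow> G x) (at_right 0)"
    using integral_right_quotient_tendsto_ae[OF G] by blast
  obtain N2 where N2: "negligible N2"
    "\<And>x. x \<notin> N2 \<Longrightarrow> ((\<lambda>h. integral {x - h..x} G / h) \<longlongrightarrow> G x) (at_right 0)"
    using integral_left_quotient_tendsto_ae[OF G] by blast
  show ?thesis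
  proof (rule that[of "N1 \<union> N2"])
    show "negligible (N1 \<union> N2)" using N1(1) N2(1) by simp
    fix x assume x: "x \<in> {a<..<b}" "x \<notin> N1 \<union> N2"
    let ?F = "\<lambda>t. integral {a..t} g"
    have "G x = g x" using x by (simp add: G_def)
    have diff: "?F z - ?F y = integral {y..z} G" if "a \<le> y" "y \<le> z" "z \<le> b" for y z
    proof -
      have "g integrable_on {a..z}"
        by (rule integrable_on_subinterval[OF g]) (use that in auto)
      then have "integral {a..y} g + integral {y..z} g = integral {a..z} g"
        by (rule Henstock_Kurzweil_Integration.integral_combine[OF that(1,2)])
      moreover have "integral {y..z} G = integral {y..z} g"
        by (rule integral_cong) (use that in \<open>simp add: G_def\<close>)
      ultimately show ?thesis by simp
    qed
    have right: "((\<lambda>y. (?F y - ?F x) / (y - x)) \<longlongrightarrow> g x) (at_right x)"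
      unfolding filterlim_at_right_to_0[of _ _ x]
    proof (rule Lim_transform_eventually)
      show "((\<lambda>h. integral {x..x + h} G / h) \<longlongrightarrow> g x) (at_right 0)"
        using N1(2)[of x] x \<open>G x = g x\<close> by simp
      show "\<forall>\<^sub>F h in at_right 0. integral {x..x + h} G / h = (?F (h + x) - ?F x) / (h + x - x)"
        unfolding eventually_at_right_field
        by (rule exI[of _ "b - x"]) (use x diff[of x] in \<open>auto simp: add.commute\<close>)
    qed
    have left: "((\<lambda>y. (?F y - ?F x) / (y - x)) \<longlongrightarrow> g x) (at_left x)"
      unfolding filterlim_at_left_to_right filterlim_at_right_to_0[of _ _ "- x"]
    proof (rule Lim_transform_eventually)
      show "((\<lambda>h. integral {x - h..x} G / h) \<longlongrightarrow> g x) (at_right 0)"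
        using N2(2)[of x] x \<open>G x = g x\<close> by simp
      show "\<forall>\<^sub>F h in at_right 0. integral {x - h..x} G / h
          = (?F (- (h + - x)) - ?F x) / (- (h + - x) - x)"
        unfolding eventually_at_right_field
      proof (intro exI[of _ "x - a"] conjI allI impI)
        fix h :: real assume "0 < h" "h < x - a"
        then show "integral {x - h..x} G / h = (?F (- (h + - x)) - ?F x) / (- (h + - x) - x)"
          using diff[of "x - h" x] x by (simp add: field_simps)
      qed (use x in simp)
    qed
    show "(?F has_real_derivative g x) (at x)"
      unfolding has_field_derivative_iff using filterlim_split_at[OF left right] .
  qed
qed

lemma sob12_deriv_ae:
  assumes f: "sob12 a b f" and ab: "a \<le> b"
  obtains g N where "g integrable_on {a..b}" "(\<lambda>t. (g t)\<^sup>2) integrable_on {a..b}"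
    "negligible N" "\<And>x. x \<in> {a<..<b} \<Longrightarrow> x \<notin> N \<Longrightarrow> deriv f x = g x"
    "integral {a..b} g = f b - f a"
proof -
  obtain g where g: "g absolutely_integrable_on {a..b}" "(\<lambda>t. (g t)\<^sup>2) integrable_on {a..b}"
    "\<And>t. t \<in> {a..b} \<Longrightarrow> f t = f a + integral {a..t} g"
    using f unfolding sob12_def by blast
  then have gi: "g integrable_on {a..b}" using set_lebesgue_integral_eq_integral(1) by blast
  obtain N where N: "negligible N"
    "\<And>x. x \<in> {a<..<b} \<Longrightarrow> x \<notin> N \<Longrightarrow> ((\<lambda>t. integral {a..t} g) has_real_derivative g x) (at x)"
    using indefinite_integral_has_derivative_ae[OF gi] by blast
  show ?thesis
  proof (rule that[OF gi g(2) N(1)])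
    fix x assume x: "x \<in> {a<..<b}" "x \<notin> N"
    have "((\<lambda>t. f a + integral {a..t} g) has_real_derivative g x) (at x)"
      using N(2)[OF x] by (auto intro!: derivative_eq_intros)
    then have "(f has_real_derivative g x) (at x)"
    proof (rule has_field_derivative_transform_within_open[of _ _ _ "{a<..<b}"])
      show "f a + integral {a..y} g = f y" if "y \<in> {a<..<b}" for y
        using g(3)[of y] that by simp
    qed (use x in auto)
    then show "deriv f x = g x" by (rule DERIV_imp_deriv)
  next
    show "integral {a..b} g = f b - f a" using g(3)[of b] ab by simp
  qed
qed

lemma square_integral_le:
  fixes g :: "real \<Rightarrow> real"
  assumes ab: "a < b" and g: "g integrable_on {a..b}" and g2: "(\<lambda>t. (g t)\<^sup>2) integrable_on {a..b}"
  shows "(integral {a..b} g)\<^sup>2 \<le> (b - a) * integral {a..b} (\<lambda>t. (g t)\<^sup>2)"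
proof -
  define I where "I = integral {a..b} g"
  define J where "J = integral {a..b} (\<lambda>t. (g t)\<^sup>2)"
  define m where "m = I / (b - a)"
  have "((\<lambda>t. (g t)\<^sup>2 - 2 * m * g t + m\<^sup>2) has_integral (J - 2 * m * I + m\<^sup>2 * (b - a))) {a..b}"
    unfolding I_def J_def using ab
    by (intro has_integral_add has_integral_diff has_integral_mult_right integrable_integral g g2)
      (use has_integral_const_real[of "m\<^sup>2" a b] in \<open>simp add: mult.commute\<close>)
  moreover have "(g t)\<^sup>2 - 2 * m * g t + m\<^sup>2 = (g t - m)\<^sup>2" for t
    by (simp add: power2_eq_square algebra_simps)
  ultimately have "0 \<le> J - 2 * m * I + m\<^sup>2 * (b - a)"
    by (metis (no_types, lifting) has_integral_nonneg zero_le_power2)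
  also have "\<dots> = J - I\<^sup>2 / (b - a)"
  proof -
    have "m\<^sup>2 * (b - a) = I\<^sup>2 / (b - a)" "2 * m * I = 2 * (I\<^sup>2 / (b - a))"
      using ab by (simp_all add: m_def power2_eq_square)
    then show ?thesis by simp
  qed
  finally show ?thesis
    using ab by (simp add: I_def J_def field_simps)
qed

lemma sob12_energy_ge:
  assumes f: "sob12 a b f" and ab: "a < b"
  obtains E where "((\<lambda>t. (deriv f t)\<^sup>2) has_integral E) {a..b}" "(f b - f a)\<^sup>2 / (b - a) \<le> E"
proof -
  obtain g N where g: "g integrable_on {a..b}" "(\<lambda>t. (g t)\<^sup>2) integrable_on {a..b}"
    "negligible N" "\<And>x. x \<in> {a<..<b} \<Longrightarrow> x \<notin> N \<Longrightarrow> deriv f x = g x"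
    "integral {a..b} g = f b - f a"
    using sob12_deriv_ae[OF f] ab by (metis less_imp_le)
  show ?thesis
  proof (rule that)
    show "((\<lambda>t. (deriv f t)\<^sup>2) has_integral integral {a..b} (\<lambda>t. (g t)\<^sup>2)) {a..b}"
      by (rule has_integral_spike[of "N \<union> {a, b}", rotated 2, OF integrable_integral[OF g(2)]])
        (use g(3,4) in auto)
    show "(f b - f a)\<^sup>2 / (b - a) \<le> integral {a..b} (\<lambda>t. (g t)\<^sup>2)"
      using square_integral_le[OF ab g(1,2)] ab by (simp add: g(5) divide_le_eq mult.commute)
  qed
qed

definition Dir2_affine :: "real \<Rightarrow> real \<Rightarrow> (real \<Rightarrow> real) \<Rightarrow> (real \<Rightarrow> real) \<Rightarrow> real" where
  "Dir2_affine a b v1 v2 = ((v1 b - v1 a)\<^sup>2 + (v2 b - v2 a)\<^sup>2) / (b - a)"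

lemma Dir2_affine_le_Dir2:
  assumes "Q2sob a b v1 v2" "a < b"
  shows "Dir2_affine a b v1 v2 \<le> Dir2 a b v1 v2"
proof -
  obtain E1 where E1: "((\<lambda>t. (deriv v1 t)\<^sup>2) has_integral E1) {a..b}" "(v1 b - v1 a)\<^sup>2 / (b - a) \<le> E1"
    using sob12_energy_ge[of a b v1] assms unfolding Q2sob_def by blast
  obtain E2 where E2: "((\<lambda>t. (deriv v2 t)\<^sup>2) has_integral E2) {a..b}" "(v2 b - v2 a)\<^sup>2 / (b - a) \<le> E2"
    using sob12_energy_ge[of a b v2] assms unfolding Q2sob_def by blast
  have "Dir2 a b v1 v2 = E1 + E2"
    unfolding Dir2_def using has_integral_add[OF E1(1) E2(1)] by (rule integral_unique)
  then show ?thesis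
    using E1(2) E2(2) unfolding Dir2_affine_def by (simp add: add_divide_distrib)
qed

lemma abs_sin_minus_le: "\<bar>sin x - x\<bar> \<le> \<bar>x\<bar> ^ 3 / 6" for x :: real
  using Maclaurin_sin_bound[of x 3]
  by (simp add: numeral_3_eq_3 sin_coeff_def fact_numeral)

lemma abs_sin_minus_taylor5_le: "\<bar>sin x - (x - x ^ 3 / 6)\<bar> \<le> \<bar>x\<bar> ^ 5 / 120" for x :: real
proof -
  have "{..<5::nat} = {0, 1, 2, 3, 4}" by auto
  then show ?thesis
    using Maclaurin_sin_bound[of x 5] by (simp add: sin_coeff_def fact_numeral)
qed

lemma x_minus_sin_ge:
  fixes x :: real
  assumes "0 \<le> x" "x \<le> 1"
  shows "x ^ 3 / 8 \<le> x - sin x"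
proof -
  have "x ^ 5 \<le> x ^ 3" using assms by (simp add: power_decreasing)
  moreover have "\<bar>sin x - (x - x ^ 3 / 6)\<bar> \<le> x ^ 5 / 120"
    using abs_sin_minus_taylor5_le[of x] assms by simp
  ultimately show ?thesis by linarith
qed

lemma sin_neq_self:
  fixes x :: real
  assumes "x \<noteq> 0" "\<bar>x\<bar> \<le> 1"
  shows "sin x \<noteq> x"
proof -
  have "0 < \<bar>x\<bar> ^ 3 / 8" using assms(1) by simp
  moreover have "\<bar>x\<bar> ^ 3 / 8 \<le> \<bar>x\<bar> - sin \<bar>x\<bar>"
    using x_minus_sin_ge[of "\<bar>x\<bar>"] assms(2) by simp
  ultimately have "sin \<bar>x\<bar> < \<bar>x\<bar>" by linarith
  then show ?thesis by (cases "x \<ge> 0") auto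
qed

lemma sin_square_gap_ge:
  fixes r :: real
  assumes "0 \<le> r" "r \<le> 1"
  shows "r ^ 4 / 8 \<le> r\<^sup>2 - (sin r)\<^sup>2"
proof -
  have "r ^ 4 / 8 = (r ^ 3 / 8) * r" by (simp add: power_numeral_reduce)
  also have "\<dots> \<le> (r - sin r) * (r + sin r)"
    using x_minus_sin_ge[OF assms] assms sin_ge_zero[of r] sin_x_le_x[of r] pi_gt3
    by (intro mult_mono) auto
  also have "\<dots> = r\<^sup>2 - (sin r)\<^sup>2" by (simp add: power2_eq_square algebra_simps)
  finally show ?thesis .
qed

lemma u_nonneg: "0 \<le> t \<Longrightarrow> u1 t = sin t \<and> u2 t = t"
  using sin_x_le_x[of t] by (simp add: u1_def u2_def)

lemma u_nonpos: "t \<le> 0 \<Longrightarrow> u1 t = t \<and> u2 t = sin t"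
  using sin_x_le_x[of "- t"] by (simp add: u1_def u2_def)

lemma u_chord_energy_ge:
  assumes "a \<le> c" "c - a \<le> 2"
  shows "(c - a)\<^sup>2 + (sin c - sin a)\<^sup>2 - ((c - a) / 2) ^ 4 / 2
    \<le> (u1 c - u1 a)\<^sup>2 + (u2 c - u2 a)\<^sup>2"
proof (cases "a < 0 \<and> 0 < c")
  case True
  \<comment> \<open>the sheets cross inside \<open>(a, c)\<close>, which lowers the chord energy by \<open>2 p q\<close>\<close>
  define p where "p = sin a - a"
  define q where "q = c - sin c"
  have p: "0 \<le> p" "p \<le> (- a) ^ 3 / 6"
    using sin_x_le_x[of "- a"] abs_sin_minus_le[of a] True by (simp_all add: p_def abs_le_iff)
  have q: "0 \<le> q" "q \<le> c ^ 3 / 6"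
    using sin_x_le_x[of c] abs_sin_minus_le[of c] True by (simp_all add: q_def abs_le_iff)
  have "((c - a) / 2)\<^sup>2 - (- a) * c = ((c + a) / 2)\<^sup>2"
    by (simp add: power2_eq_square field_simps)
  then have ac: "(- a) * c \<le> ((c - a) / 2)\<^sup>2"
    using zero_le_power2[of "(c + a) / 2"] by linarith
  have "0 \<le> (- a) * c"
    using True by (simp add: mult_le_0_iff)
  have "p * q \<le> ((- a) ^ 3 / 6) * (c ^ 3 / 6)"
    using p q True by (intro mult_mono) auto
  also have "\<dots> = ((- a) * c) ^ 3 / 36" by (simp add: power_mult_distrib)
  also have "\<dots> \<le> (((c - a) / 2)\<^sup>2) ^ 3 / 36"
    using ac \<open>0 \<le> (- a) * c\<close> by (intro divide_right_mono power_mono) auto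
  also have "\<dots> \<le> ((c - a) / 2) ^ 4 / 4"
  proof -
    have "((c - a) / 2) ^ 6 \<le> ((c - a) / 2) ^ 4"
      using assms by (intro power_decreasing) auto
    moreover have "0 \<le> ((c - a) / 2) ^ 4" by simp
    moreover have "(((c - a) / 2)\<^sup>2) ^ 3 = ((c - a) / 2) ^ 6" by (simp flip: power_mult)
    ultimately show ?thesis by linarith
  qed
  finally have "2 * (p * q) \<le> ((c - a) / 2) ^ 4 / 2" by simp
  moreover have "u1 a = a" "u2 a = sin a" "u1 c = sin c" "u2 c = c"
    using u_nonpos[of a] u_nonneg[of c] True by auto
  then have "(u1 c - u1 a)\<^sup>2 + (u2 c - u2 a)\<^sup>2 = (c - a)\<^sup>2 + (sin c - sin a)\<^sup>2 - 2 * (p * q)"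
    unfolding p_def q_def power2_eq_square by (simp add: algebra_simps)
  ultimately show ?thesis by linarith
next
  case False
  then consider "0 \<le> a" | "c \<le> 0" by linarith
  then have "(u1 c - u1 a)\<^sup>2 + (u2 c - u2 a)\<^sup>2 = (c - a)\<^sup>2 + (sin c - sin a)\<^sup>2"
  proof cases
    case 1
    then show ?thesis using u_nonneg[of a] u_nonneg[of c] assms(1) by simp
  next
    case 2
    then show ?thesis using u_nonpos[of a] u_nonpos[of c] assms(1) by simp
  qed
  then show ?thesis by simp
qed

lemma deriv_u_energy:
  assumes "t \<noteq> 0"
  shows "(deriv u1 t)\<^sup>2 + (deriv u2 t)\<^sup>2 = 1 + (cos t)\<^sup>2"
proof -
  have *: "deriv f t = deriv g t" if "\<And>s. s \<in> S \<Longrightarrow> f s = g s" "open S" "t \<in> S"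
    for f g :: "real \<Rightarrow> real" and S
    using that by (intro deriv_cong_ev) (auto simp: eventually_nhds)
  show ?thesis
  proof (cases "t > 0")
    case True
    have "deriv u1 t = deriv sin t" "deriv u2 t = deriv (\<lambda>s. s) t"
      by (rule *[of "{0<..}"]; use u_nonneg True in simp)+
    then show ?thesis by (simp add: DERIV_imp_deriv[OF DERIV_sin])
  next
    case False
    then have "t < 0" using assms by simp
    have "deriv u1 t = deriv (\<lambda>s. s) t" "deriv u2 t = deriv sin t"
      by (rule *[of "{..<0}"]; use u_nonpos \<open>t < 0\<close> in simp)+
    then show ?thesis by (simp add: DERIV_imp_deriv[OF DERIV_sin])
  qed
qed

lemma Dir2_u:
  assumes "a \<le> c"
  shows "Dir2 a c u1 u2 = 3 * (c - a) / 2 + (sin (2 * c) - sin (2 * a)) / 4"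
proof -
  let ?F = "\<lambda>t::real. 3 * t / 2 + sin (2 * t) / 4"
  have "((\<lambda>t. 1 + (cos t)\<^sup>2) has_integral (?F c - ?F a)) {a..c}"
  proof (rule fundamental_theorem_of_calculus[OF assms])
    fix t assume "t \<in> {a..c}"
    have "(?F has_real_derivative 3 / 2 + cos (2 * t) * 2 / 4) (at t within {a..c})"
      by (auto intro!: derivative_eq_intros)
    moreover have "3 / 2 + cos (2 * t) * 2 / 4 = 1 + (cos t)\<^sup>2"
      using cos_double_cos[of t] by linarith
    ultimately show "(?F has_vector_derivative 1 + (cos t)\<^sup>2) (at t within {a..c})"
      by (simp add: has_real_derivative_iff_has_vector_derivative)
  qed
  then have "((\<lambda>t. (deriv u1 t)\<^sup>2 + (deriv u2 t)\<^sup>2) has_integral (?F c - ?F a)) {a..c}"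
    by (rule has_integral_spike[of "{0}", rotated 2]) (simp_all add: deriv_u_energy)
  then show ?thesis
    unfolding Dir2_def by (simp add: integral_unique algebra_simps diff_divide_distrib)
qed

lemma Dir2_u_centered_le:
  assumes r: "0 \<le> r" and lo: "- (pi / 4) \<le> x - r" and hi: "x + r \<le> pi / 4"
  shows "2 * r * Dir2 (x - r) (x + r) u1 u2 \<le> 4 * r\<^sup>2 + 4 * (cos x)\<^sup>2 * r\<^sup>2"
proof -
  have "2 * r * Dir2 (x - r) (x + r) u1 u2 = 6 * r\<^sup>2 + r * (cos (2 * x) * sin (2 * r))"
  proof -
    have "sin (2 * (x + r)) - sin (2 * (x - r)) = 2 * cos (2 * x) * sin (2 * r)"
      using sin_add[of "2 * x" "2 * r"] sin_diff[of "2 * x" "2 * r"] by (simp add: algebra_simps)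
    then show ?thesis
      using Dir2_u[of "x - r" "x + r"] r by (simp add: power2_eq_square algebra_simps)
  qed
  moreover have "r * (cos (2 * x) * sin (2 * r)) \<le> r * (cos (2 * x) * (2 * r))"
    using sin_x_le_x[of "2 * r"] r lo hi by (intro mult_left_mono cos_ge_zero) auto
  moreover have "r * (cos (2 * x) * (2 * r)) = 4 * (cos x)\<^sup>2 * r\<^sup>2 - 2 * r\<^sup>2"
    unfolding cos_double_cos by (simp add: power2_eq_square algebra_simps)
  ultimately show ?thesis by linarith
qed

lemma Dir2_u_le_Dir2_affine:
  assumes r: "0 < r" and lo: "- (pi / 4) \<le> x - r" and hi: "x + r \<le> pi / 4"
  shows "Dir2 (x - r) (x + r) u1 u2 \<le> (1 + omega r) * Dir2_affine (x - r) (x + r) u1 u2"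
proof -
  define s where "s = sin r"
  define W where "W = 1 + omega r"
  define S where "S = (u1 (x + r) - u1 (x - r))\<^sup>2 + (u2 (x + r) - u2 (x - r))\<^sup>2"
  have r1: "r \<le> 1" using lo hi pi_less_4 by linarith
  have "0 < s" unfolding s_def using r r1 pi_gt3 by (intro sin_gt_zero) auto
  then have Ws: "W * s\<^sup>2 = r\<^sup>2" and W0: "0 \<le> W"
    by (simp_all add: W_def omega_def s_def)
  have "sin (x + r) - sin (x - r) = 2 * cos x * s"
    unfolding s_def by (simp add: sin_add sin_diff)
  then have "4 * r\<^sup>2 + 4 * (cos x)\<^sup>2 * s\<^sup>2 - r ^ 4 / 2 \<le> S"
    using u_chord_energy_ge[of "x - r" "x + r"] r r1 unfolding S_def
    by (simp add: power_mult_distrib)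
  then have "W * (4 * r\<^sup>2 + 4 * (cos x)\<^sup>2 * s\<^sup>2 - r ^ 4 / 2) \<le> W * S"
    using W0 by (rule mult_left_mono)
  moreover have "4 * s\<^sup>2 \<le> 4 * r\<^sup>2 - r ^ 4 / 2"
    using sin_square_gap_ge[of r] r r1 unfolding s_def by simp
  then have "W * (4 * s\<^sup>2) \<le> W * (4 * r\<^sup>2 - r ^ 4 / 2)"
    using W0 by (rule mult_left_mono)
  moreover have "W * (4 * (cos x)\<^sup>2 * s\<^sup>2) = 4 * (cos x)\<^sup>2 * r\<^sup>2" "W * (4 * s\<^sup>2) = 4 * r\<^sup>2"
    by (simp_all add: Ws[symmetric] algebra_simps)
  ultimately have "2 * r * Dir2 (x - r) (x + r) u1 u2 \<le> W * S"
    using Dir2_u_centered_le[of r x] r lo hi by (simp add: right_diff_distrib distrib_left)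
  moreover have "S = 2 * r * Dir2_affine (x - r) (x + r) u1 u2"
    unfolding Dir2_affine_def S_def using r by simp
  ultimately have "2 * r * Dir2 (x - r) (x + r) u1 u2 \<le> 2 * r * (W * Dir2_affine (x - r) (x + r) u1 u2)"
    by (simp add: algebra_simps)
  then show ?thesis
    unfolding W_def by (rule mult_left_le_imp_le) (use r in simp)
qed

lemma sigma_u_discontinuous_at_0:
  "\<not> continuous (at 0 within {- (pi / 4)<..<pi / 4}) (\<lambda>t. real (sigma_u t))"
proof
  let ?S = "{- (pi / 4)<..<pi / 4 :: real}"
  assume "continuous (at 0 within ?S) (\<lambda>t. real (sigma_u t))"
  then have "((\<lambda>t. real (sigma_u t)) \<longlongrightarrow> 1) (at 0 within ?S)"
    by (simp add: continuous_within sigma_u_def)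
  moreover have "\<forall>\<^sub>F t in at 0 within ?S. real (sigma_u t) = 2"
    unfolding eventually_at
    by (rule exI[of _ 1]) (auto simp: sigma_u_def dest!: sin_neq_self)
  then have "((\<lambda>t. real (sigma_u t)) \<longlongrightarrow> 2) (at 0 within ?S)"
    by (rule tendsto_eventually)
  moreover have "0 islimpt ?S"
    using pi_gt_zero by (intro interior_limit_point) (simp add: interior_open)
  then have "at 0 within ?S \<noteq> bot" by (simp add: trivial_limit_within)
  ultimately show False
    using tendsto_unique by force
qed

theorem mainTheorem9:
  shows "(\<forall>x r v1 v2. r > 0 \<and> {x - r<..<x + r} \<subseteq> {-(pi/4)<..<pi/4}
            \<and> Dir_minimizing (x - r) (x + r) v1 v2
            \<and> v1 (x - r) = u1 (x - r) \<and> v2 (x - r) = u2 (x - r)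
            \<and> v1 (x + r) = u1 (x + r) \<and> v2 (x + r) = u2 (x + r)
          \<longrightarrow> Dir2 (x - r) (x + r) u1 u2 \<le> (1 + omega r) * Dir2 (x - r) (x + r) v1 v2)
       \<and> \<not> continuous (at 0 within {-(pi/4)<..<pi/4}) (\<lambda>t. real (sigma_u t))"
proof (intro conjI allI impI)
  fix x r :: real and v1 v2 :: "real \<Rightarrow> real"
  assume "r > 0 \<and> {x - r<..<x + r} \<subseteq> {-(pi/4)<..<pi/4}
            \<and> Dir_minimizing (x - r) (x + r) v1 v2
            \<and> v1 (x - r) = u1 (x - r) \<and> v2 (x - r) = u2 (x - r)
            \<and> v1 (x + r) = u1 (x + r) \<and> v2 (x + r) = u2 (x + r)"
  then have r: "r > 0" and sub: "{x - r<..<x + r} \<subseteq> {-(pi/4)<..<pi/4}"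
    and v: "Q2sob (x - r) (x + r) v1 v2"
    and same_ends: "Dir2_affine (x - r) (x + r) u1 u2 = Dir2_affine (x - r) (x + r) v1 v2"
    by (auto simp: Dir_minimizing_def Dir2_affine_def)
  have "- (pi / 4) \<le> x - r" "x + r \<le> pi / 4"
    using sub r unfolding greaterThanLessThan_subseteq_greaterThanLessThan by auto
  then have "Dir2 (x - r) (x + r) u1 u2 \<le> (1 + omega r) * Dir2_affine (x - r) (x + r) v1 v2"
    by (metis Dir2_u_le_Dir2_affine[OF r] same_ends)
  also have "\<dots> \<le> (1 + omega r) * Dir2 (x - r) (x + r) v1 v2"
    using Dir2_affine_le_Dir2[OF v] r by (intro mult_left_mono) (auto simp: omega_def)
  finally show "Dir2 (x - r) (x + r) u1 u2 \<le> (1 + omega r) * Dir2 (x - r) (x + r) v1 v2" .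
qed (rule sigma_u_discontinuous_at_0)

end
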